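(* Assume the setting described in the context and that the joint distribution of $(X,\mathcal X_n)$ is absolutely continuous with respect to Lebesgue measure on $\mathbb R^{n+1}$. Consider the conditions: (i) $\Lambda$ (respectively $\Lambda_g$) is compact in $\mathbb R^n$; (ii) the copula diagonal $C_{X,\widehat X_\lambda}(x,x)$ of $(X,\widehat X_\lambda)$ is continuous in $\lambda$ on $\Lambda$ (respectively $\Lambda_g$), uniformly with respect to $x\in[0,1]$; (iii) for each $\lambda\in\Lambda$, $\widehat X_\lambda$ has an absolutely continuous distribution with density $p_{\widehat X_\lambda}$, and the map $\lambda\mapsto p_{\widehat X_\lambda}$ from $\Lambda$ to $L^1(\mathbb R)$ is continuous with respect to the $L^1$-norm. If (i) and (ii) hold (for $\Lambda_g$), then problem (P1) has a solution. If (i)–(iii) hold (for $\Lambda$), then problems (P2) and (P3) have solutions.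
   Context: Let $X$ be a real random variable whose c.d.f. $F_X$ is continuous and strictly increasing on the support of $X$, and let $\mathcal X_n=(X_1,\dots,X_n)$ be a random vector on the same probability space. Let $\Lambda\subseteq\mathbb R^n$ and let $g:\Lambda\times\mathbb R^n\to\mathbb R$ be continuous (hence measurable); set $\widehat X_\lambda:=g(\lambda,\mathcal X_n)$, $\lambda\in\Lambda$, and $\Lambda_g:=\{\lambda\in\Lambda: F_X(\widehat X_\lambda)\text{ is uniformly distributed on }(0,1)\}$. Fix $\gamma>0$ and put $Y_1^\lambda:=F_X(\widehat X_\lambda)$ with c.d.f. $F_{Y_1^\lambda}$. The problems are: (P1) minimize $\mathbf E F_X(X\vee\widehat X_\lambda)$ over $\lambda\in\Lambda_g$; (P2) minimize $2\,\mathbf E F_X(X\vee\widehat X_\lambda)-\mathbf E F_X(\widehat X_\lambda)$ over $\lambda\in\Lambda$; (P3) minimize $2\,\mathbf E F_X(X\vee\widehat X_\lambda)-\mathbf E F_X(\widehat X_\lambda)+\gamma\int_0^1F_{Y_1^\lambda}(y)\big[F_{Y_1^\lambda}(y)-2y\big]dy$ over $\lambda\in\Lambda$. Here $a\vee b=\max\{a,b\}$. *)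

theory Defs
  imports "HOL-Probability.Probability"
begin

definition rv_cdf :: "'a measure \<Rightarrow> ('a \<Rightarrow> real) \<Rightarrow> real \<Rightarrow> real" where
  "rv_cdf M Y = cdf (distr M borel Y)"

definition rv_support :: "'a measure \<Rightarrow> ('a \<Rightarrow> real) \<Rightarrow> real set" where
  "rv_support M Y = {x. \<forall>e>0. measure M {\<omega>\<in>space M. Y \<omega> \<in> ball x e} > 0}"

definition is_copula :: "(real \<Rightarrow> real \<Rightarrow> real) \<Rightarrow> bool" where
  "is_copula C \<longleftrightarrow>
     (\<forall>u\<in>{0..1}. C u 0 = 0 \<and> C 0 u = 0 \<and> C u 1 = u \<and> C 1 u = u) \<and>
     (\<forall>u1 u2 v1 v2. 0 \<le> u1 \<longrightarrow> u1 \<le> u2 \<longrightarrow> u2 \<le> 1 \<longrightarrow> 0 \<le> v1 \<longrightarrow> v1 \<le> v2 \<longrightarrow> v2 \<le> 1 \<longrightarrow>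
        C u2 v2 - C u2 v1 - C u1 v2 + C u1 v1 \<ge> 0)"

definition copula_of :: "'a measure \<Rightarrow> ('a \<Rightarrow> real) \<Rightarrow> ('a \<Rightarrow> real) \<Rightarrow> (real \<Rightarrow> real \<Rightarrow> real) \<Rightarrow> bool" where
  "copula_of M Y Z C \<longleftrightarrow> is_copula C \<and>
     (\<forall>s t. measure M {\<omega>\<in>space M. Y \<omega> \<le> s \<and> Z \<omega> \<le> t} = C (rv_cdf M Y s) (rv_cdf M Z t))"

definition copula_diag_unif_cont ::
  "'a measure \<Rightarrow> ('a \<Rightarrow> real) \<Rightarrow> ('l::metric_space \<Rightarrow> 'a \<Rightarrow> real) \<Rightarrow> 'l set \<Rightarrow> bool" where
  "copula_diag_unif_cont M Y Xh L \<longleftrightarrow>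
     (\<exists>C. (\<forall>l\<in>L. copula_of M Y (Xh l) (C l)) \<and>
          (\<forall>l\<in>L. \<forall>e>0. \<exists>d>0. \<forall>m\<in>L. dist m l < d \<longrightarrow>
              (\<forall>x\<in>{0..1}. \<bar>C m x x - C l x x\<bar> < e)))"

definition densities_L1_cont ::
  "'a measure \<Rightarrow> ('l::metric_space \<Rightarrow> 'a \<Rightarrow> real) \<Rightarrow> 'l set \<Rightarrow> bool" where
  "densities_L1_cont M Xh L \<longleftrightarrow>
     (\<exists>p. (\<forall>l\<in>L. (\<forall>x. 0 \<le> p l x) \<and> integrable lborel (p l) \<and>
               distributed M lborel (Xh l) (\<lambda>x. ennreal (p l x))) \<and>
          (\<forall>l\<in>L. \<forall>e>0. \<exists>d>0. \<forall>m\<in>L. dist m l < d \<longrightarrow>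
              (\<integral>x. \<bar>p m x - p l x\<bar> \<partial>lborel) < e))"

definition Lambda_g :: "'a measure \<Rightarrow> ('a \<Rightarrow> real) \<Rightarrow> ('l \<Rightarrow> 'a \<Rightarrow> real) \<Rightarrow> 'l set \<Rightarrow> 'l set" where
  "Lambda_g M X Xh L = {l\<in>L. distr M lborel (\<lambda>\<omega>. rv_cdf M X (Xh l \<omega>)) = uniform_measure lborel {0<..<1}}"

definition J1 :: "'a measure \<Rightarrow> ('a \<Rightarrow> real) \<Rightarrow> ('l \<Rightarrow> 'a \<Rightarrow> real) \<Rightarrow> 'l \<Rightarrow> real" where
  "J1 M X Xh l = (\<integral>\<omega>. rv_cdf M X (max (X \<omega>) (Xh l \<omega>)) \<partial>M)"

definition J2 :: "'a measure \<Rightarrow> ('a \<Rightarrow> real) \<Rightarrow> ('l \<Rightarrow> 'a \<Rightarrow> real) \<Rightarrow> 'l \<Rightarrow> real" where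
  "J2 M X Xh l = 2 * J1 M X Xh l - (\<integral>\<omega>. rv_cdf M X (Xh l \<omega>) \<partial>M)"

definition J3 :: "'a measure \<Rightarrow> ('a \<Rightarrow> real) \<Rightarrow> ('l \<Rightarrow> 'a \<Rightarrow> real) \<Rightarrow> real \<Rightarrow> 'l \<Rightarrow> real" where
  "J3 M X Xh \<gamma> l = J2 M X Xh l +
     \<gamma> * (let G = rv_cdf M (\<lambda>\<omega>. rv_cdf M X (Xh l \<omega>)) in
           (LBINT y=0..1. G y * (G y - 2 * y)))"

end

theory Submission
  imports Defs
begin

text \<open>All three objectives depend continuously on \<open>\<lambda>\<close>, so each attains its minimum on a
nonempty compact parameter set. Continuity comes from dominated convergence: as \<open>\<lambda>' \<rightarrow> \<lambda>\<close>,
the integrands \<open>F_X(X \<or> g(\<lambda>', X_n))\<close> and \<open>F_X(g(\<lambda>', X_n))\<close> converge pointwise by continuity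
of \<open>g\<close> and \<open>F_X\<close>, and they are bounded by 1. For the penalty term of (P3), pointwise
convergence of the random variables \<open>Y_1^\<lambda>'\<close> makes their c.d.f.s converge at every non-atom of
\<open>Y_1^\<lambda>\<close>, i.e. at all but countably many points, which again suffices for dominated convergence
on \<open>[0,1]\<close>.\<close>

lemma rv_cdf_eq_measure:
  assumes "prob_space M" "Y \<in> borel_measurable M"
  shows "rv_cdf M Y x = measure M {\<omega>\<in>space M. Y \<omega> \<le> x}"
  unfolding rv_cdf_def cdf_def using assms
  by (subst measure_distr) (auto intro!: arg_cong[where f="measure M"])

lemma rv_cdf_nonneg_le_1:
  assumes "prob_space M" "Y \<in> borel_measurable M"
  shows "0 \<le> rv_cdf M Y x" "rv_cdf M Y x \<le> 1"
  using assms by (auto simp: rv_cdf_eq_measure prob_space.prob_le_1)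

lemma mono_rv_cdf:
  assumes "prob_space M" "Y \<in> borel_measurable M"
  shows "mono (rv_cdf M Y)"
proof -
  interpret prob_space M by fact
  show ?thesis unfolding mono_def using assms
    by (auto simp: rv_cdf_eq_measure intro!: finite_measure_mono)
qed

lemma rv_cdf_eq_expectation_indicator:
  assumes "prob_space M" "Y \<in> borel_measurable M"
  shows "rv_cdf M Y x = (\<integral>\<omega>. indicator {..x} (Y \<omega>) \<partial>M)"
proof -
  have "(\<integral>\<omega>. indicator {..x} (Y \<omega>) \<partial>M) = integral\<^sup>L M (indicator {\<omega>\<in>space M. Y \<omega> \<le> x})"
    by (rule Bochner_Integration.integral_cong) (auto simp: indicator_def)
  also have "\<dots> = measure M {\<omega>\<in>space M. Y \<omega> \<le> x}"
    by (simp add: Int_absorb2 subset_iff)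
  finally show ?thesis using assms by (simp add: rv_cdf_eq_measure)
qed

lemma countable_atoms:
  fixes Y :: "'a \<Rightarrow> real"
  assumes "prob_space M" "Y \<in> borel_measurable M"
  shows "countable {y. measure M {\<omega>\<in>space M. Y \<omega> = y} \<noteq> 0}"
proof -
  interpret D: prob_space "distr M borel Y"
    using assms by (rule prob_space.prob_space_distr)
  have "measure (distr M borel Y) {y} = measure M {\<omega>\<in>space M. Y \<omega> = y}" for y
    using assms(2) by (subst measure_distr) (auto intro!: arg_cong[where f="measure M"])
  then show ?thesis using D.countable_support by simp
qed

lemma tendsto_expectation_bounded:
  fixes f :: "nat \<Rightarrow> 'a \<Rightarrow> real"
  assumes "prob_space M"
    and "\<And>n. f n \<in> borel_measurable M" "f0 \<in> borel_measurable M"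
    and "\<And>n \<omega>. \<omega> \<in> space M \<Longrightarrow> \<bar>f n \<omega>\<bar> \<le> B"
    and "AE \<omega> in M. (\<lambda>n. f n \<omega>) \<longlonglongrightarrow> f0 \<omega>"
  shows "(\<lambda>n. \<integral>\<omega>. f n \<omega> \<partial>M) \<longlonglongrightarrow> (\<integral>\<omega>. f0 \<omega> \<partial>M)"
proof -
  interpret prob_space M by fact
  show ?thesis
    by (rule integral_dominated_convergence[where w="\<lambda>_. B"]) (use assms in \<open>auto intro: AE_I2\<close>)
qed

lemma tendsto_rv_cdf_at_non_atom:
  assumes "prob_space M"
    and "\<And>n. Y n \<in> borel_measurable M" "Y0 \<in> borel_measurable M"
    and "\<And>\<omega>. \<omega> \<in> space M \<Longrightarrow> (\<lambda>n. Y n \<omega>) \<longlonglongrightarrow> Y0 \<omega>"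
    and "measure M {\<omega>\<in>space M. Y0 \<omega> = y} = 0"
  shows "(\<lambda>n. rv_cdf M (Y n) y) \<longlonglongrightarrow> rv_cdf M Y0 y"
proof -
  interpret prob_space M by fact
  have "{\<omega>\<in>space M. Y0 \<omega> = y} \<in> null_sets M"
    using assms(3,5) by (simp add: null_sets_def emeasure_eq_measure)
  from AE_not_in[OF this] AE_space have "AE \<omega> in M. Y0 \<omega> \<noteq> y"
    by eventually_elim auto
  then have indicator_converges:
    "AE \<omega> in M. (\<lambda>n. indicator {..y} (Y n \<omega>) :: real) \<longlonglongrightarrow> indicator {..y} (Y0 \<omega>)"
    using AE_space
  proof eventually_elim
    case (elim \<omega>)
    note lim = assms(4)[OF elim(2)]
    \<comment> \<open>away from the jump of the indicator, \<open>Y n \<omega>\<close> eventually lies on the same side of \<open>y\<close>\<close>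
    have "eventually (\<lambda>n. Y n \<omega> < y) sequentially" if "Y0 \<omega> < y"
      using order_tendstoD(2)[OF lim that] .
    moreover have "eventually (\<lambda>n. Y n \<omega> > y) sequentially" if "Y0 \<omega> > y"
      using order_tendstoD(1)[OF lim that] .
    ultimately have "eventually (\<lambda>n. (indicator {..y} (Y n \<omega>) :: real) = indicator {..y} (Y0 \<omega>)) sequentially"
      using elim(1) by (cases "Y0 \<omega> < y") (auto elim!: eventually_mono)
    then show ?case by (rule tendsto_eventually)
  qed
  have "(\<lambda>n. \<integral>\<omega>. indicator {..y} (Y n \<omega>) \<partial>M) \<longlonglongrightarrow> (\<integral>\<omega>. indicator {..y} (Y0 \<omega>) \<partial>M :: real)"
    by (rule tendsto_expectation_bounded[OF assms(1) _ _ _ indicator_converges, where B=1])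
      (use assms in auto)
  then show ?thesis using assms by (simp add: rv_cdf_eq_expectation_indicator)
qed

lemma interval_lebesgue_integral_01:
  fixes f :: "real \<Rightarrow> real"
  shows "(LBINT y=0..1. f y) = (\<integral>y. indicator {0..1} y * f y \<partial>lborel)"
  using interval_integral_Icc[of 0 1 f]
  by (simp add: set_lebesgue_integral_def zero_ereal_def one_ereal_def)

lemma tendsto_interval_integral_01_bounded:
  fixes f :: "nat \<Rightarrow> real \<Rightarrow> real"
  assumes "\<And>n. f n \<in> borel_measurable borel" "f0 \<in> borel_measurable borel"
    and "\<And>n y. y \<in> {0..1} \<Longrightarrow> \<bar>f n y\<bar> \<le> B"
    and "AE y in lborel. (\<lambda>n. f n y) \<longlonglongrightarrow> f0 y"
  shows "(\<lambda>n. LBINT y=0..1. f n y) \<longlonglongrightarrow> (LBINT y=0..1. f0 y)"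
  unfolding interval_lebesgue_integral_01
proof (rule integral_dominated_convergence[where w="\<lambda>y. B * indicator {0..1} y"])
  show "AE y in lborel. (\<lambda>n. indicator {0..1} y * f n y) \<longlonglongrightarrow> indicator {0..1} y * f0 y"
    using assms(4) by eventually_elim (rule tendsto_mult_left)
  show "AE y in lborel. norm (indicator {0..1} y * f n y) \<le> B * indicator {0..1} y" for n
    using assms(3) by (intro AE_I2) (auto simp: indicator_def)
  show "integrable lborel (\<lambda>y::real. B * indicator {0..1} y :: real)"
    by (intro integrable_mult_right integrable_real_indicator) simp_all
qed (use assms(1,2) in measurable)

lemma abs_mult_diff_double_le_2:
  fixes a y :: real
  assumes "a \<in> {0..1}" "y \<in> {0..1}"
  shows "\<bar>a * (a - 2 * y)\<bar> \<le> 2"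
proof -
  have "\<bar>a * (a - 2 * y)\<bar> = \<bar>a\<bar> * \<bar>a - 2 * y\<bar>" by (rule abs_mult)
  also have "\<dots> \<le> 1 * 2" using assms by (intro mult_mono) auto
  finally show ?thesis by simp
qed

context
  fixes M :: "'a measure" and X :: "'a \<Rightarrow> real"
    and Xh :: "'l::metric_space \<Rightarrow> 'a \<Rightarrow> real" and L :: "'l set"
  assumes prob: "prob_space M"
    and X_measurable: "X \<in> borel_measurable M"
    and cdf_continuous: "continuous_on UNIV (rv_cdf M X)"
    and Xh_measurable: "\<And>l. l \<in> L \<Longrightarrow> Xh l \<in> borel_measurable M"
    and Xh_continuous: "\<And>\<omega>. \<omega> \<in> space M \<Longrightarrow> continuous_on L (\<lambda>l. Xh l \<omega>)"
begin

private lemma isCont_cdf: "isCont (rv_cdf M X) x"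
  using cdf_continuous by (simp add: continuous_on_eq_continuous_at)

private lemma cdf_measurable: "rv_cdf M X \<in> borel_measurable borel"
  by (rule borel_measurable_continuous_onI[OF cdf_continuous])

private lemma abs_cdf_le_1: "\<bar>rv_cdf M X x\<bar> \<le> 1"
  using rv_cdf_nonneg_le_1[OF prob X_measurable] by (simp add: abs_le_iff)

private lemma cdf_Xh_measurable: "l \<in> L \<Longrightarrow> (\<lambda>\<omega>. rv_cdf M X (Xh l \<omega>)) \<in> borel_measurable M"
  using measurable_compose[OF Xh_measurable cdf_measurable] by (simp add: o_def)

private lemma tendsto_Xh:
  assumes "\<And>n. u n \<in> L" "a \<in> L" "u \<longlonglongrightarrow> a" "\<omega> \<in> space M"
  shows "(\<lambda>n. Xh (u n) \<omega>) \<longlonglongrightarrow> Xh a \<omega>"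
  using Xh_continuous[OF assms(4)] assms(1-3)
  unfolding continuous_on_sequentially by (auto simp: o_def)

lemma continuous_on_J1: "continuous_on L (J1 M X Xh)"
proof (rule continuous_on_sequentiallyI)
  fix u a assume u: "\<forall>n. u n \<in> L" "a \<in> L" "u \<longlonglongrightarrow> a"
  show "(\<lambda>n. J1 M X Xh (u n)) \<longlonglongrightarrow> J1 M X Xh a"
    unfolding J1_def
  proof (rule tendsto_expectation_bounded[OF prob, where B=1])
    have "(\<lambda>\<omega>. rv_cdf M X (max (X \<omega>) (Xh l \<omega>))) \<in> borel_measurable M" if "l \<in> L" for l
      using measurable_compose[OF borel_measurable_max[OF X_measurable Xh_measurable[OF that]]
          cdf_measurable] by (simp add: max.commute)
    then show "(\<lambda>\<omega>. rv_cdf M X (max (X \<omega>) (Xh (u n) \<omega>))) \<in> borel_measurable M"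
      "(\<lambda>\<omega>. rv_cdf M X (max (X \<omega>) (Xh a \<omega>))) \<in> borel_measurable M" for n
      using u by auto
    show "AE \<omega> in M. (\<lambda>n. rv_cdf M X (max (X \<omega>) (Xh (u n) \<omega>))) \<longlonglongrightarrow> rv_cdf M X (max (X \<omega>) (Xh a \<omega>))"
      using u by (intro AE_I2 isCont_tendsto_compose[OF isCont_cdf] tendsto_max tendsto_const
          tendsto_Xh) auto
  qed (rule abs_cdf_le_1)
qed

lemma tendsto_expectation_cdf_Xh:
  assumes "\<And>n. u n \<in> L" "a \<in> L" "u \<longlonglongrightarrow> a"
  shows "(\<lambda>n. \<integral>\<omega>. rv_cdf M X (Xh (u n) \<omega>) \<partial>M) \<longlonglongrightarrow> (\<integral>\<omega>. rv_cdf M X (Xh a \<omega>) \<partial>M)"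
  using assms
  by (intro tendsto_expectation_bounded[OF prob, where B=1] cdf_Xh_measurable abs_cdf_le_1
      AE_I2 isCont_tendsto_compose[OF isCont_cdf] tendsto_Xh)

lemma continuous_on_J2: "continuous_on L (J2 M X Xh)"
proof (rule continuous_on_sequentiallyI)
  fix u a assume "\<forall>n. u n \<in> L" "a \<in> L" "u \<longlonglongrightarrow> a"
  then show "(\<lambda>n. J2 M X Xh (u n)) \<longlonglongrightarrow> J2 M X Xh a"
    unfolding J2_def
    by (intro tendsto_diff tendsto_mult_left tendsto_expectation_cdf_Xh
        continuous_on_J1[unfolded continuous_on_sequentially, rule_format, unfolded o_def]) auto
qed

lemma tendsto_penalty:
  assumes u: "\<And>n. u n \<in> L" "a \<in> L" "u \<longlonglongrightarrow> a"
  defines "G \<equiv> \<lambda>l. rv_cdf M (\<lambda>\<omega>. rv_cdf M X (Xh l \<omega>))"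
  shows "(\<lambda>n. LBINT y=0..1. G (u n) y * (G (u n) y - 2 * y)) \<longlonglongrightarrow> (LBINT y=0..1. G a y * (G a y - 2 * y))"
proof (rule tendsto_interval_integral_01_bounded[where B=2])
  have G_measurable: "G l \<in> borel_measurable borel" if "l \<in> L" for l
    unfolding G_def by (rule borel_measurable_mono[OF mono_rv_cdf[OF prob cdf_Xh_measurable[OF that]]])
  show "(\<lambda>y. G (u n) y * (G (u n) y - 2 * y)) \<in> borel_measurable borel" for n
    using G_measurable[OF u(1)] by measurable
  show "(\<lambda>y. G a y * (G a y - 2 * y)) \<in> borel_measurable borel"
    using G_measurable[OF u(2)] by measurable
  show "\<bar>G (u n) y * (G (u n) y - 2 * y)\<bar> \<le> 2" if "y \<in> {0..1}" for n y
    unfolding G_def using rv_cdf_nonneg_le_1[OF prob cdf_Xh_measurable[OF u(1)]] that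
    by (intro abs_mult_diff_double_le_2) auto
  let ?atoms = "{y. measure M {\<omega>\<in>space M. rv_cdf M X (Xh a \<omega>) = y} \<noteq> 0}"
  have "AE y in lborel. y \<notin> ?atoms"
    by (intro AE_not_in countable_imp_null_set_lborel countable_atoms[OF prob]
        cdf_Xh_measurable u(2))
  then show "AE y in lborel. (\<lambda>n. G (u n) y * (G (u n) y - 2 * y)) \<longlonglongrightarrow> G a y * (G a y - 2 * y)"
  proof eventually_elim
    case (elim y)
    have "(\<lambda>n. G (u n) y) \<longlonglongrightarrow> G a y"
      unfolding G_def using elim u
      by (intro tendsto_rv_cdf_at_non_atom[OF prob] cdf_Xh_measurable
          isCont_tendsto_compose[OF isCont_cdf] tendsto_Xh) auto
    then show ?case by (intro tendsto_intros)
  qed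
qed

lemma continuous_on_J3: "continuous_on L (J3 M X Xh \<gamma>)"
proof (rule continuous_on_sequentiallyI)
  fix u a assume "\<forall>n. u n \<in> L" "a \<in> L" "u \<longlonglongrightarrow> a"
  then show "(\<lambda>n. J3 M X Xh \<gamma> (u n)) \<longlonglongrightarrow> J3 M X Xh \<gamma> a"
    unfolding J3_def Let_def
    by (intro tendsto_add tendsto_mult_left tendsto_penalty
        continuous_on_J2[unfolded continuous_on_sequentially, rule_format, unfolded o_def]) auto
qed

end

lemma continuous_on_fix_second:
  assumes "continuous_on (A \<times> B) (\<lambda>(x, y). f x y)" "y \<in> B"
  shows "continuous_on A (\<lambda>x. f x y)"
  using continuous_on_compose[OF continuous_on_Pair[OF continuous_on_id continuous_on_const]
      continuous_on_subset[OF assms(1)]] assms(2)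
  by (auto simp: o_def)

lemma continuous_on_fix_first:
  assumes "continuous_on (A \<times> B) (\<lambda>(x, y). f x y)" "x \<in> A"
  shows "continuous_on B (f x)"
  using continuous_on_compose[OF continuous_on_Pair[OF continuous_on_const continuous_on_id]
      continuous_on_subset[OF assms(1)]] assms(2)
  by (auto simp: o_def)

theorem mainTheorem10:
  fixes M :: "'a measure" and X :: "'a \<Rightarrow> real" and Xs :: "'a \<Rightarrow> real^'n"
    and \<Lambda> :: "(real^'n) set" and g :: "real^'n \<Rightarrow> real^'n \<Rightarrow> real" and \<gamma> :: real
  assumes "prob_space M"
    and "X \<in> borel_measurable M" and "Xs \<in> borel_measurable M"
    and "continuous_on UNIV (rv_cdf M X)"
    and "strict_mono_on (rv_support M X) (rv_cdf M X)"
    and "continuous_on (\<Lambda> \<times> UNIV) (\<lambda>(l, v). g l v)"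
    and "\<gamma> > 0"
    and "absolutely_continuous lborel (distr M lborel (\<lambda>\<omega>. (X \<omega>, Xs \<omega>)))"
  shows
   "(let Xh = (\<lambda>l \<omega>. g l (Xs \<omega>)); Lg = Lambda_g M X Xh \<Lambda> in
      (compact Lg \<and> Lg \<noteq> {} \<and> copula_diag_unif_cont M X Xh Lg \<longrightarrow>
         (\<exists>l\<in>Lg. \<forall>m\<in>Lg. J1 M X Xh l \<le> J1 M X Xh m)) \<and>
      (compact \<Lambda> \<and> \<Lambda> \<noteq> {} \<and> copula_diag_unif_cont M X Xh \<Lambda> \<and> densities_L1_cont M Xh \<Lambda> \<longrightarrow>
         (\<exists>l\<in>\<Lambda>. \<forall>m\<in>\<Lambda>. J2 M X Xh l \<le> J2 M X Xh m) \<and>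
         (\<exists>l\<in>\<Lambda>. \<forall>m\<in>\<Lambda>. J3 M X Xh \<gamma> l \<le> J3 M X Xh \<gamma> m)))"
proof -
  define Xh where "Xh = (\<lambda>l \<omega>. g l (Xs \<omega>))"
  have Xh_continuous: "continuous_on \<Lambda> (\<lambda>l. Xh l \<omega>)" for \<omega>
    unfolding Xh_def using assms(6) by (rule continuous_on_fix_second) simp
  have Xh_measurable: "Xh l \<in> borel_measurable M" if "l \<in> \<Lambda>" for l
  proof -
    have "continuous_on UNIV (g l)"
      using assms(6) that by (rule continuous_on_fix_first)
    from measurable_compose[OF assms(3) borel_measurable_continuous_onI[OF this]]
    show ?thesis
      by (simp add: Xh_def o_def)
  qed
  note setting = assms(1,2,4) Xh_measurable Xh_continuous
  have "Lambda_g M X Xh \<Lambda> \<subseteq> \<Lambda>"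
    unfolding Lambda_g_def by auto
  then show ?thesis
    using continuous_on_J1[OF setting] continuous_on_J2[OF setting] continuous_on_J3[OF setting]
    unfolding Xh_def[symmetric] Let_def
    by (intro conjI impI continuous_attains_inf) (auto intro: continuous_on_subset)
qed

end
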